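(* Let $f\in\mathcal H_{(d)}$ and nonzero $x,y\in\mathbb C^{n+1}$ with $\operatorname{rank}Df(x)|_{x^\perp}=n$. Then \[\|(Df(x)|_{x^\perp})^{-1}Df(x)|_{y^\perp}\|\le 1+d_P(x,y)\tan\theta_x.\]
   Context: $\mathcal H_{(d)}$: systems $f=(f_1,\dots,f_n)$ of homogeneous complex polynomials in $n+1$ variables. $x^\perp$ is the Hermitian orthogonal complement of $x$; $Df(x)|_{V}$ denotes the restriction of $Df(x):\mathbb C^{n+1}\to\mathbb C^n$ to a subspace $V$; norms are operator norms. $d_P(x,y)=\sin d_R(x,y)$ where $\cos d_R(x,y)=|\langle x,y\rangle|/(\|x\|\|y\|)$, $d_R\in[0,\pi/2]$. When $\operatorname{rank}Df(x)=n$, $\theta_x$ is the angle between the complex lines $\mathbb Cx$ and $\ker Df(x)$ (the angle $\theta\in[0,\pi/2]$ with $\cos\theta=|\langle x,w\rangle|/(\|x\|\|w\|)$ for $0\ne w\in\ker Df(x)$). *)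

theory Defs
  imports "HOL-Analysis.Analysis"
begin

definition herm_inner :: "complex^'k \<Rightarrow> complex^'k \<Rightarrow> complex" where
  "herm_inner u v = (\<Sum>i\<in>UNIV. u $ i * cnj (v $ i))"

definition hperp :: "complex^'k \<Rightarrow> (complex^'k) set" where
  "hperp x = {v. herm_inner v x = 0}"

definition homog_poly :: "nat \<Rightarrow> (complex^'k \<Rightarrow> complex) \<Rightarrow> bool" where
  "homog_poly d p \<longleftrightarrow>
     (\<exists>c :: ('k \<Rightarrow> nat) \<Rightarrow> complex.
        finite {a. c a \<noteq> 0} \<and> (\<forall>a. c a \<noteq> 0 \<longrightarrow> (\<Sum>i\<in>UNIV. a i) = d) \<and>
        p = (\<lambda>z. \<Sum>a | c a \<noteq> 0. c a * (\<Prod>i\<in>UNIV. (z $ i) ^ a i)))"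

definition H_d :: "('n \<Rightarrow> nat) \<Rightarrow> (complex^'m \<Rightarrow> complex^'n) set" where
  "H_d d = {f. \<forall>i. homog_poly (d i) (\<lambda>z. f z $ i)}"

definition rank_restr :: "(complex^'m \<Rightarrow> complex^'n) \<Rightarrow> (complex^'m) set \<Rightarrow> nat" where
  "rank_restr A V = vec.dim (A ` V)"

definition restr_inv :: "(complex^'m \<Rightarrow> complex^'n) \<Rightarrow> complex^'m \<Rightarrow> complex^'n \<Rightarrow> complex^'m" where
  "restr_inv A x w = (THE u. u \<in> hperp x \<and> A u = w)"

definition onorm_on :: "(complex^'m \<Rightarrow> complex^'k) \<Rightarrow> (complex^'m) set \<Rightarrow> real" where
  "onorm_on g V = (SUP v\<in>V. norm (g v) / norm v)"

definition dR :: "complex^'m \<Rightarrow> complex^'m \<Rightarrow> real" where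
  "dR x y = arccos (cmod (herm_inner x y) / (norm x * norm y))"

definition dP :: "complex^'m \<Rightarrow> complex^'m \<Rightarrow> real" where
  "dP x y = sin (dR x y)"

text \<open>theta_x: angle between C x and ker A (A = Df(x) of rank n), computed via a
  nonzero kernel vector.\<close>
definition theta :: "(complex^'m \<Rightarrow> complex^'n) \<Rightarrow> complex^'m \<Rightarrow> real" where
  "theta A x = (let w = (SOME w. w \<noteq> 0 \<and> A w = 0) in
                  arccos (cmod (herm_inner x w) / (norm x * norm w)))"

end

theory Submission
  imports Defs
begin

(* Let A = Df(x), which is complex-linear, and let w span ker A.  Since
   A is injective on x^perp (rank hypothesis and dim x^perp = n), w is not in x^perp,
   and for every v the unique u in x^perp with A u = A v is the oblique projection
   u = v - (<v,x>/<w,x>) w.  Splitting v and w into their components along x and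
   orthogonal to x gives |u| <= |v| + |<v,x>|/|x| * tan theta_x, where theta_x is the
   angle between x and w.  Finally, for v in y^perp, |<v,x>| <= |v| |x| sin d_R(x,y). *)

lemma herm_inner_add_left: "herm_inner (u + v) w = herm_inner u w + herm_inner v w"
  by (simp add: herm_inner_def distrib_right sum.distrib)

lemma herm_inner_diff_left: "herm_inner (u - v) w = herm_inner u w - herm_inner v w"
  by (simp add: herm_inner_def left_diff_distrib sum_subtractf)

lemma herm_inner_scale_left: "herm_inner (c *s u) w = c * herm_inner u w"
  by (simp add: herm_inner_def sum_distrib_left mult.assoc)

lemma herm_inner_diff_right: "herm_inner u (v - w) = herm_inner u v - herm_inner u w"
  by (simp add: herm_inner_def right_diff_distrib sum_subtractf)

lemma herm_inner_scale_right: "herm_inner u (c *s w) = cnj c * herm_inner u w"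
  by (simp add: herm_inner_def sum_distrib_left algebra_simps)

lemma herm_inner_zero_left [simp]: "herm_inner 0 u = 0"
  by (simp add: herm_inner_def)

lemma cnj_herm_inner: "cnj (herm_inner u v) = herm_inner v u"
  by (simp add: herm_inner_def mult.commute)

lemma cmod_herm_inner_commute: "cmod (herm_inner u v) = cmod (herm_inner v u)"
  by (metis complex_mod_cnj cnj_herm_inner)

lemma herm_inner_self: "herm_inner u u = complex_of_real ((norm u)\<^sup>2)"
proof -
  have sq: "(norm u)\<^sup>2 = (\<Sum>i\<in>UNIV. (cmod (u $ i))\<^sup>2)"
    unfolding norm_vec_def L2_set_def by (simp add: sum_nonneg)
  show ?thesis
    unfolding sq herm_inner_def of_real_sum complex_norm_square by simp
qed

lemma Re_herm_inner: "Re (herm_inner u v) = inner u v"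
  unfolding herm_inner_def inner_vec_def Re_sum
  by (intro sum.cong refl) (simp add: inner_complex_def)

lemma cnj_mult_self: "cnj c * c = complex_of_real ((cmod c)\<^sup>2)"
  by (metis complex_norm_square mult.commute)

lemma norm_scale_vec: "norm (c *s (v::complex^'k)) = cmod c * norm v"
proof -
  have "complex_of_real ((norm (c *s v))\<^sup>2) = complex_of_real ((cmod c * norm v)\<^sup>2)"
    unfolding herm_inner_self[symmetric] herm_inner_scale_left herm_inner_scale_right
    by (simp add: herm_inner_self power_mult_distrib mult.assoc[symmetric] cnj_mult_self)
  then have "(norm (c *s v))\<^sup>2 = (cmod c * norm v)\<^sup>2"
    using of_real_eq_iff by blast
  then show ?thesis by simp
qed

(* Cauchy-Schwarz for the Hermitian inner product, obtained from the real one by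
   rotating v with a unimodular scalar that makes the inner product real. *)
lemma herm_inner_Cauchy_Schwarz: "cmod (herm_inner u v) \<le> norm u * norm v"
proof (cases "herm_inner u v = 0")
  case False
  define c where "c = cnj (cmod (herm_inner u v) / herm_inner u v)"
  have "cnj c * herm_inner u v = complex_of_real (cmod (herm_inner u v))"
    using False by (simp add: c_def)
  then have "cmod (herm_inner u v) = Re (herm_inner u (c *s v))"
    by (simp add: herm_inner_scale_right)
  also have "\<dots> \<le> norm u * norm (c *s v)"
    unfolding Re_herm_inner by (rule norm_cauchy_schwarz)
  also have "\<dots> = norm u * norm v"
    using False by (simp add: c_def norm_scale_vec norm_divide)
  finally show ?thesis .
qed simp

(* The cosine of the Hermitian angle between two vectors (equivalently between the complex
   lines they span); both d_R and theta_x are arccosines of such a quantity. *)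
definition hcos :: "complex^'k \<Rightarrow> complex^'k \<Rightarrow> real" where
  "hcos u v = cmod (herm_inner u v) / (norm u * norm v)"

lemma hcos_commute: "hcos u v = hcos v u"
  by (simp add: hcos_def cmod_herm_inner_commute mult.commute)

lemma hcos_bounds: "0 \<le> hcos u v" "hcos u v \<le> 1"
  using herm_inner_Cauchy_Schwarz[of u v]
  by (auto simp: hcos_def divide_le_eq_1 zero_less_mult_iff)

lemma sin_arccos_hcos: "sin (arccos (hcos u v)) = sqrt (1 - (hcos u v)\<^sup>2)"
  using hcos_bounds[of u v] by (simp add: sin_arccos_abs)

definition perp_part :: "complex^'k \<Rightarrow> complex^'k \<Rightarrow> complex^'k" where
  "perp_part z u = u - (herm_inner u z / complex_of_real ((norm z)\<^sup>2)) *s z"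

lemma herm_inner_perp_part: "z \<noteq> 0 \<Longrightarrow> herm_inner (perp_part z u) z = 0"
  by (simp add: perp_part_def herm_inner_diff_left herm_inner_scale_left herm_inner_self)

lemma norm_perp_part_sq:
  assumes "z \<noteq> 0"
  shows "(norm (perp_part z u))\<^sup>2 = (norm u)\<^sup>2 - (cmod (herm_inner u z))\<^sup>2 / (norm z)\<^sup>2"
proof -
  define t where "t = herm_inner u z / complex_of_real ((norm z)\<^sup>2)"
  define p where "p = perp_part z u"
  have p: "p = u - t *s z" by (simp add: p_def t_def perp_part_def)
  have orth: "herm_inner p z = 0" using herm_inner_perp_part[OF assms] by (simp add: p_def)
  have "herm_inner p p = herm_inner p u - cnj t * herm_inner p z"
    by (simp add: p herm_inner_diff_right herm_inner_scale_right)
  also have "\<dots> = herm_inner p u" using orth by simp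
  also have "\<dots> = herm_inner u u - t * herm_inner z u"
    by (simp add: p herm_inner_diff_left herm_inner_scale_left)
  also have "t * herm_inner z u
      = complex_of_real ((cmod (herm_inner u z))\<^sup>2) / complex_of_real ((norm z)\<^sup>2)"
  proof -
    have "t * herm_inner z u
        = herm_inner u z * cnj (herm_inner u z) / complex_of_real ((norm z)\<^sup>2)"
      unfolding t_def cnj_herm_inner by simp
    then show ?thesis by (simp only: complex_norm_square)
  qed
  finally have "complex_of_real ((norm p)\<^sup>2)
      = complex_of_real ((norm u)\<^sup>2 - (cmod (herm_inner u z))\<^sup>2 / (norm z)\<^sup>2)"
    by (simp add: herm_inner_self)
  then show ?thesis using of_real_eq_iff unfolding p_def by blast
qed

lemma norm_perp_part_le: "z \<noteq> 0 \<Longrightarrow> norm (perp_part z u) \<le> norm u"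
  by (rule power2_le_imp_le) (simp_all add: norm_perp_part_sq)

lemma norm_perp_part:
  assumes "z \<noteq> 0" "u \<noteq> 0"
  shows "norm (perp_part z u) = norm u * sqrt (1 - (hcos u z)\<^sup>2)"
proof -
  have "(norm (perp_part z u))\<^sup>2 = (norm u)\<^sup>2 * (1 - (hcos u z)\<^sup>2)"
    using assms by (simp add: norm_perp_part_sq hcos_def field_simps)
  then have "sqrt ((norm (perp_part z u))\<^sup>2) = sqrt ((norm u)\<^sup>2) * sqrt (1 - (hcos u z)\<^sup>2)"
    by (simp add: real_sqrt_mult)
  then show ?thesis by simp
qed

(* If v is orthogonal to y, then only the part of x orthogonal to y pairs with v:
   |<v,x>| <= |v| |x| sin(d_R(x,y)). *)
lemma herm_inner_orth_bound:
  assumes vy: "herm_inner v y = 0" and x: "x \<noteq> 0" and y: "y \<noteq> 0"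
  shows "cmod (herm_inner v x) \<le> norm v * (norm x * sqrt (1 - (hcos x y)\<^sup>2))"
proof -
  have "herm_inner v (perp_part y x) = herm_inner v x"
    using vy by (simp add: perp_part_def herm_inner_diff_right herm_inner_scale_right)
  then show ?thesis
    using herm_inner_Cauchy_Schwarz[of v "perp_part y x"] norm_perp_part[OF y x] by simp
qed

(* Write the oblique
   projection as perp_part x v - l * perp_part x w and estimate both terms. *)
lemma oblique_projection_bound:
  assumes x: "x \<noteq> 0" and wx: "herm_inner w x \<noteq> 0"
  shows "norm (v - (herm_inner v x / herm_inner w x) *s w)
         \<le> norm v + cmod (herm_inner v x) / norm x * (sqrt (1 - (hcos x w)\<^sup>2) / hcos x w)"
proof -
  define l where "l = herm_inner v x / herm_inner w x"
  have w: "w \<noteq> 0" using wx by auto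
  have lw: "l * herm_inner w x = herm_inner v x"
    using wx by (simp add: l_def)
  have "v - l *s w = perp_part x v - l *s perp_part x w"
    unfolding perp_part_def vec_eq_iff using lw by (simp add: algebra_simps)
  then have "norm (v - l *s w) \<le> norm (perp_part x v) + cmod l * norm (perp_part x w)"
    by (metis norm_scale_vec norm_triangle_ineq4)
  also have "norm (perp_part x v) \<le> norm v"
    by (rule norm_perp_part_le[OF x])
  also have "cmod l * norm (perp_part x w)
      = cmod (herm_inner v x) / norm x * (sqrt (1 - (hcos x w)\<^sup>2) / hcos x w)"
    using x w wx unfolding norm_perp_part[OF x w] hcos_commute[of w x]
    by (simp add: l_def hcos_def norm_divide cmod_herm_inner_commute[of x w] field_simps)
  finally show ?thesis by (simp add: l_def)
qed

lemma hperp_subspace: "vec.subspace (hperp x)"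
  unfolding vec.subspace_def hperp_def by (simp add: herm_inner_add_left herm_inner_scale_left)

lemma dim_hperp_less:
  fixes x :: "complex^'m"
  assumes "x \<noteq> 0"
  shows "vec.dim (hperp x) < CARD('m)"
proof -
  have "x \<notin> hperp x" using assms by (simp add: hperp_def herm_inner_self)
  then have "x \<notin> vec.span (hperp x)" using vec.span_eq_iff hperp_subspace by blast
  then have "vec.dim (insert x (hperp x)) = vec.dim (hperp x) + 1" by (simp add: vec.dim_insert)
  then show ?thesis using dim_subset_UNIV_cart_gen[of "insert x (hperp x)"] by simp
qed

lemma kernel_nontrivial:
  fixes A :: "complex^'m \<Rightarrow> complex^'n"
  assumes lin: "Vector_Spaces.linear (*s) (*s) A" and dims: "CARD('n) < CARD('m)"
  shows "\<exists>w. w \<noteq> 0 \<and> A w = 0"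
proof (rule ccontr)
  assume "\<nexists>w. w \<noteq> 0 \<and> A w = 0"
  then have "inj_on A (vec.span UNIV)"
    by (intro inj_onI) (metis vec.linear_diff[OF lin] eq_iff_diff_eq_0)
  then have "vec.dim (A ` UNIV) = CARD('m)"
    using vec.dim_image_eq[OF lin] vec_dim_card by metis
  then show False using dim_subset_UNIV_cart_gen[of "A ` UNIV"] dims by simp
qed

(* A nonzero kernel vector inside V strictly lowers the dimension of the image of V:
   extend it to a basis of V; the images of the other basis vectors span A(V). *)
lemma dim_image_less_if_kernel:
  fixes A :: "complex^'m \<Rightarrow> complex^'n"
  assumes lin: "Vector_Spaces.linear (*s) (*s) A" and u: "u \<in> V" "u \<noteq> 0" "A u = 0"
  shows "vec.dim (A ` V) < vec.dim V"
proof -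
  have "{u} \<subseteq> V" "vec.independent {u}" using u by auto
  then obtain B where B: "u \<in> B" "B \<subseteq> V" "vec.independent B" "V \<subseteq> vec.span B"
    by (metis insert_subset vec.maximal_independent_subset_extend)
  have fin: "finite B" using B(3) vec.independent_bound_general by blast
  have "A ` V \<subseteq> vec.span (A ` B)"
    using B(4) vec.linear_span_image[OF lin] by blast
  also have "A ` B \<subseteq> insert 0 (A ` (B - {u}))" using u(3) by blast
  then have "vec.span (A ` B) \<subseteq> vec.span (A ` (B - {u}))"
    by (metis vec.span_insert_0 vec.span_mono)
  finally have "vec.dim (A ` V) \<le> card (A ` (B - {u}))"
    using fin by (intro vec.dim_le_card) auto
  also have "\<dots> \<le> card (B - {u})" using fin by (intro card_image_le) auto
  also have "\<dots> < card B" by (rule card_Diff1_less[OF fin B(1)])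
  also have "\<dots> = vec.dim V" by (rule vec.basis_card_eq_dim[OF B(2) B(4) B(3)])
  finally show ?thesis .
qed

lemma hperp_kernel_trivial:
  fixes A :: "complex^'m \<Rightarrow> complex^'n"
  assumes lin: "Vector_Spaces.linear (*s) (*s) A"
    and dims: "CARD('m) = CARD('n) + 1" and x: "x \<noteq> 0"
    and rk: "rank_restr A (hperp x) = CARD('n)"
    and u: "u \<in> hperp x" "A u = 0"
  shows "u = 0"
proof (rule ccontr)
  assume "u \<noteq> 0"
  then have "CARD('n) < vec.dim (hperp x)"
    using dim_image_less_if_kernel[OF lin u(1) _ u(2)] rk by (simp add: rank_restr_def)
  then show False using dim_hperp_less[OF x] dims by simp
qed

lemma restr_inv_eqI:
  assumes lin: "Vector_Spaces.linear (*s) (*s) A"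
    and inj: "\<And>u. u \<in> hperp x \<Longrightarrow> A u = 0 \<Longrightarrow> u = 0"
    and u: "u \<in> hperp x" "A u = b"
  shows "restr_inv A x b = u"
  unfolding restr_inv_def
proof (rule the_equality)
  show "u \<in> hperp x \<and> A u = b" using u by simp
  fix u' assume u': "u' \<in> hperp x \<and> A u' = b"
  have "u' - u \<in> hperp x" using u u' by (simp add: hperp_def herm_inner_diff_left)
  moreover have "A (u' - u) = 0" using u u' by (simp add: vec.linear_diff[OF lin])
  ultimately show "u' = u" using inj by fastforce
qed

lemma restr_inv_via_kernel:
  assumes lin: "Vector_Spaces.linear (*s) (*s) A"
    and inj: "\<And>u. u \<in> hperp x \<Longrightarrow> A u = 0 \<Longrightarrow> u = 0"
    and w: "A w = 0" "herm_inner w x \<noteq> 0"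
  shows "restr_inv A x (A v) = v - (herm_inner v x / herm_inner w x) *s w"
proof (rule restr_inv_eqI[OF lin inj])
  show "v - (herm_inner v x / herm_inner w x) *s w \<in> hperp x"
    using w(2) by (simp add: hperp_def herm_inner_diff_left herm_inner_scale_left)
  show "A (v - (herm_inner v x / herm_inner w x) *s w) = A v"
    by (simp add: vec.linear_diff[OF lin] vec.linear_scale[OF lin] w(1))
qed

lemma onorm_on_leI:
  assumes "V \<noteq> {}" "K \<ge> 0" "\<And>v. v \<in> V \<Longrightarrow> norm (g v) \<le> K * norm v"
  shows "onorm_on g V \<le> K"
  unfolding onorm_on_def
proof (rule cSUP_least)
  fix v assume "v \<in> V"
  then show "norm (g v) / norm v \<le> K"
    using assms(2,3) by (cases "v = 0") (simp_all add: divide_le_eq)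
qed fact

(* The theorem for an arbitrary complex-linear map A in place of Df(x): with w the chosen
   kernel vector, restr_inv A x (A v) is the oblique projection of v along w, which is
   bounded by oblique_projection_bound and herm_inner_orth_bound; here
   S = sin d_R(x,y) = d_P(x,y) and T = tan theta_x. *)
lemma restr_inv_onorm_bound:
  fixes A :: "complex^'m \<Rightarrow> complex^'n"
  assumes lin: "Vector_Spaces.linear (*s) (*s) A"
    and dims: "CARD('m) = CARD('n) + 1" and x: "x \<noteq> 0" and y: "y \<noteq> 0"
    and rk: "rank_restr A (hperp x) = CARD('n)"
  shows "onorm_on (\<lambda>v. restr_inv A x (A v)) (hperp y) \<le> 1 + dP x y * tan (theta A x)"
proof -
  define w where "w = (SOME w. w \<noteq> 0 \<and> A w = 0)"
  have w: "w \<noteq> 0" "A w = 0"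
    using someI_ex[OF kernel_nontrivial[OF lin]] dims unfolding w_def by auto
  have inj: "\<And>u. u \<in> hperp x \<Longrightarrow> A u = 0 \<Longrightarrow> u = 0"
    using hperp_kernel_trivial[OF lin dims x rk] by blast
  have wx: "herm_inner w x \<noteq> 0" using inj[of w] w by (auto simp: hperp_def)
  define c where "c = hcos x w"
  have c: "0 < c" "c \<le> 1"
    using wx x w hcos_bounds[of x w] by (auto simp: c_def hcos_def cmod_herm_inner_commute[of x])
  define T where "T = sqrt (1 - c\<^sup>2) / c"
  have tan_theta: "tan (theta A x) = T"
    using c by (simp add: theta_def Let_def w_def[symmetric] hcos_def[symmetric] c_def[symmetric]
        tan_def cos_arccos sin_arccos_abs T_def)
  have T: "T \<ge> 0" using c by (simp add: T_def abs_square_le_1)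
  define S where "S = sqrt (1 - (hcos x y)\<^sup>2)"
  have dP_eq: "dP x y = S"
    by (simp add: dP_def dR_def hcos_def[symmetric] sin_arccos_hcos S_def)
  have S: "S \<ge> 0" using hcos_bounds[of x y] by (simp add: S_def abs_square_le_1)
  have "norm (restr_inv A x (A v)) \<le> (1 + S * T) * norm v" if v: "v \<in> hperp y" for v
  proof -
    have "restr_inv A x (A v) = v - (herm_inner v x / herm_inner w x) *s w"
      by (rule restr_inv_via_kernel[OF lin inj w(2) wx])
    then have "norm (restr_inv A x (A v)) \<le> norm v + cmod (herm_inner v x) / norm x * T"
      using oblique_projection_bound[OF x wx, of v] by (simp add: T_def c_def)
    also have "cmod (herm_inner v x) / norm x * T \<le> norm v * (norm x * S) / norm x * T"
      using herm_inner_orth_bound[OF _ x y, of v] v x T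
      by (intro mult_right_mono divide_right_mono) (auto simp: hperp_def S_def)
    finally show ?thesis using x by (simp add: algebra_simps)
  qed
  moreover have "hperp y \<noteq> {}" using vec.subspace_0[OF hperp_subspace] by blast
  ultimately show ?thesis
    unfolding dP_eq tan_theta using S T by (intro onorm_on_leI) auto
qed

lemma has_derivative_vec_lambda:
  fixes f :: "'a::euclidean_space \<Rightarrow> 'b::real_normed_vector^'n"
  assumes deriv: "\<And>i. ((\<lambda>z. f z $ i) has_derivative D i) (at x)"
  shows "(f has_derivative (\<lambda>h. \<chi> i. D i h)) (at x)"
proof -
  have lin: "\<And>i. linear (D i)" using deriv has_derivative_linear by blast
  have "linear (\<lambda>h. \<chi> i. D i h)"
    by (rule linearI) (simp_all add: vec_eq_iff linear_add[OF lin] linear_scale[OF lin])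
  then have bl: "bounded_linear (\<lambda>h. \<chi> i. D i h)"
    by (simp add: linear_conv_bounded_linear)
  have "((\<lambda>y. \<chi> i. ((f y $ i - f x $ i) - D i (y - x)) /\<^sub>R norm (y - x)) \<longlongrightarrow> (\<chi> i. 0)) (at x)"
    using deriv by (intro tendsto_vec_lambda) (simp add: has_derivative_at_within)
  moreover have "(\<lambda>y. \<chi> i. ((f y $ i - f x $ i) - D i (y - x)) /\<^sub>R norm (y - x)) =
     (\<lambda>y. ((f y - f x) - (\<chi> i. D i (y - x))) /\<^sub>R norm (y - x))"
    by (rule ext) (simp add: vec_eq_iff)
  ultimately show ?thesis using bl
    by (simp add: has_derivative_at_within zero_vec_def)
qed

definition cdiff_at :: "(complex^'m \<Rightarrow> complex) \<Rightarrow> complex^'m \<Rightarrow> bool" where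
  "cdiff_at g x \<longleftrightarrow> (\<exists>D. (g has_derivative D) (at x) \<and> (\<forall>c h. D (c *s h) = c * D h))"

lemma cdiff_at_const: "cdiff_at (\<lambda>z. c) x"
  unfolding cdiff_at_def by (rule exI[of _ "\<lambda>h. 0"]) simp

lemma cdiff_at_coord: "cdiff_at (\<lambda>z. z $ i) x"
  unfolding cdiff_at_def
  by (rule exI[of _ "\<lambda>h. h $ i"]) (simp add: bounded_linear_imp_has_derivative bounded_linear_vec_nth)

lemma cdiff_at_add:
  assumes "cdiff_at f x" "cdiff_at g x"
  shows "cdiff_at (\<lambda>z. f z + g z) x"
proof -
  obtain F G where F: "(f has_derivative F) (at x)" "\<And>c h. F (c *s h) = c * F h"
    and G: "(g has_derivative G) (at x)" "\<And>c h. G (c *s h) = c * G h"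
    using assms unfolding cdiff_at_def by blast
  show ?thesis unfolding cdiff_at_def
    by (rule exI[of _ "\<lambda>h. F h + G h"]) (simp add: F G has_derivative_add algebra_simps)
qed

lemma cdiff_at_mult:
  assumes "cdiff_at f x" "cdiff_at g x"
  shows "cdiff_at (\<lambda>z. f z * g z) x"
proof -
  obtain F G where F: "(f has_derivative F) (at x)" "\<And>c h. F (c *s h) = c * F h"
    and G: "(g has_derivative G) (at x)" "\<And>c h. G (c *s h) = c * G h"
    using assms unfolding cdiff_at_def by blast
  show ?thesis unfolding cdiff_at_def
  proof (intro exI conjI allI)
    show "((\<lambda>z. f z * g z) has_derivative (\<lambda>h. f x * G h + F h * g x)) (at x)"
      by (rule has_derivative_mult[OF F(1) G(1)])
    show "f x * G (c *s h) + F (c *s h) * g x = c * (f x * G h + F h * g x)" for c h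
      by (simp add: F G algebra_simps)
  qed
qed

lemma cdiff_at_power: "cdiff_at f x \<Longrightarrow> cdiff_at (\<lambda>z. f z ^ n) x"
  by (induction n) (simp_all add: cdiff_at_const cdiff_at_mult)

lemma cdiff_at_prod:
  "finite A \<Longrightarrow> (\<And>a. a \<in> A \<Longrightarrow> cdiff_at (f a) x) \<Longrightarrow> cdiff_at (\<lambda>z. \<Prod>a\<in>A. f a z) x"
  by (induction A rule: finite_induct) (simp_all add: cdiff_at_const cdiff_at_mult)

lemma cdiff_at_sum:
  "finite A \<Longrightarrow> (\<And>a. a \<in> A \<Longrightarrow> cdiff_at (f a) x) \<Longrightarrow> cdiff_at (\<lambda>z. \<Sum>a\<in>A. f a z) x"
  by (induction A rule: finite_induct) (simp_all add: cdiff_at_const cdiff_at_add)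

lemma homog_poly_cdiff_at:
  assumes "homog_poly d p"
  shows "cdiff_at p x"
proof -
  obtain c where c: "finite {a. c a \<noteq> 0}"
    "p = (\<lambda>z. \<Sum>a | c a \<noteq> 0. c a * (\<Prod>i\<in>UNIV. (z $ i) ^ a i))"
    using assms unfolding homog_poly_def by blast
  show ?thesis unfolding c(2)
    by (intro cdiff_at_sum[OF c(1)] cdiff_at_mult cdiff_at_const cdiff_at_prod cdiff_at_power
        cdiff_at_coord) simp
qed

lemma H_d_derivative_clinear:
  fixes f :: "complex^'m \<Rightarrow> complex^'n"
  assumes "f \<in> H_d d"
  shows "Vector_Spaces.linear (*s) (*s) (frechet_derivative f (at x))"
proof -
  have "\<forall>i. \<exists>D. ((\<lambda>z. f z $ i) has_derivative D) (at x) \<and> (\<forall>c h. D (c *s h) = c * D h)"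
    using assms homog_poly_cdiff_at unfolding H_d_def cdiff_at_def by blast
  then obtain D where D: "\<And>i. ((\<lambda>z. f z $ i) has_derivative D i) (at x)"
     "\<And>i c h. D i (c *s h) = c * D i h" by metis
  have "(f has_derivative (\<lambda>h. \<chi> i. D i h)) (at x)"
    by (rule has_derivative_vec_lambda[OF D(1)])
  then have Df: "frechet_derivative f (at x) = (\<lambda>h. \<chi> i. D i h)"
    by (metis frechet_derivative_at)
  have "\<And>i. linear (D i)" using D(1) has_derivative_linear by blast
  then show ?thesis
    unfolding Df Vector_Spaces.linear_iff
    by (auto simp: vec.vector_space_axioms vec_eq_iff D(2) linear_add)
qed

theorem lemma4:
  fixes f :: "complex^'m \<Rightarrow> complex^'n" and d :: "'n \<Rightarrow> nat"
    and x y :: "complex^'m"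
  assumes "CARD('m) = CARD('n) + 1"
    and "f \<in> H_d d"
    and "x \<noteq> 0" and "y \<noteq> 0"
    and "rank_restr (frechet_derivative f (at x)) (hperp x) = CARD('n)"
  shows "onorm_on (\<lambda>v. restr_inv (frechet_derivative f (at x)) x
                          (frechet_derivative f (at x) v)) (hperp y)
         \<le> 1 + dP x y * tan (theta (frechet_derivative f (at x)) x)"
  using restr_inv_onorm_bound[OF H_d_derivative_clinear[OF assms(2)] assms(1,3,4,5)] .

end
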